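(* Let $G\neq 1$ be a finite group with $G=AB$ for subgroups $A,B$. The following are pairwise equivalent: (1) $G=AB$ is a core-factorisation. (2) There is a normal series $1=N_0\trianglelefteq N_1\trianglelefteq\cdots\trianglelefteq N_n=G$ of $G$ (all $N_i\trianglelefteq G$) such that for each $1\le i\le n$, either $N_i/N_{i-1}\le AN_{i-1}/N_{i-1}$ or $N_i/N_{i-1}\le BN_{i-1}/N_{i-1}$. (3) For every proper normal subgroup $K$ of $G$ there is a normal subgroup $M$ of $G$ with $K<M$ such that $M/K\le AK/K$ or $M/K\le BK/K$. Moreover, in (1) and (2), each term $N_i$ of such a (chief, resp. normal) series satisfies $N_i=(N_i\cap A)(N_i\cap B)$, and for $N_i\neq 1$ the factorisation $N_i=(N_i\cap A)(N_i\cap B)$ is again a core-factorisation.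
   Context: All groups are finite. A subgroup $U$ of $G$ covers a section $V/W$ ($W\trianglelefteq V\le G$) if $W(U\cap V)=V$. If $1\neq G=AB$ is a product of subgroups $A$ and $B$, then $G=AB$ is called a core-factorisation if $G$ possesses a chief series each of whose chief factors is covered by $A$ or by $B$. *)

theory Defs
  imports "HOL-Algebra.Algebra"
begin

definition normal_series :: "('a, 'b) monoid_scheme \<Rightarrow> 'a set list \<Rightarrow> bool" where
  "normal_series G Ns \<longleftrightarrow> Ns \<noteq> [] \<and> hd Ns = {\<one>\<^bsub>G\<^esub>} \<and> last Ns = carrier G \<and>
     (\<forall>N\<in>set Ns. N \<lhd> G) \<and> (\<forall>i. Suc i < length Ns \<longrightarrow> Ns ! i \<subseteq> Ns ! Suc i)"

definition chief_series :: "('a, 'b) monoid_scheme \<Rightarrow> 'a set list \<Rightarrow> bool" where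
  "chief_series G Ns \<longleftrightarrow> normal_series G Ns \<and>
     (\<forall>i. Suc i < length Ns \<longrightarrow> Ns ! i \<subset> Ns ! Suc i \<and>
        (\<forall>M. M \<lhd> G \<longrightarrow> Ns ! i \<subseteq> M \<longrightarrow> M \<subseteq> Ns ! Suc i \<longrightarrow> M = Ns ! i \<or> M = Ns ! Suc i))"

definition covers :: "('a, 'b) monoid_scheme \<Rightarrow> 'a set \<Rightarrow> 'a set \<Rightarrow> 'a set \<Rightarrow> bool" where
  "covers G U V W \<longleftrightarrow> set_mult G W (U \<inter> V) = V"

definition chief_covered :: "('a, 'b) monoid_scheme \<Rightarrow> 'a set \<Rightarrow> 'a set \<Rightarrow> 'a set list \<Rightarrow> bool" where
  "chief_covered G A B Ns \<longleftrightarrow> chief_series G Ns \<and>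
     (\<forall>i. Suc i < length Ns \<longrightarrow> covers G A (Ns ! Suc i) (Ns ! i) \<or> covers G B (Ns ! Suc i) (Ns ! i))"

definition core_factorisation :: "('a, 'b) monoid_scheme \<Rightarrow> 'a set \<Rightarrow> 'a set \<Rightarrow> bool" where
  "core_factorisation G A B \<longleftrightarrow> carrier G \<noteq> {\<one>\<^bsub>G\<^esub>} \<and> subgroup A G \<and> subgroup B G \<and>
     set_mult G A B = carrier G \<and> (\<exists>Ns. chief_covered G A B Ns)"

text \<open>The quotient inclusion V/W \<le> XW/W (W \<subseteq> V, W normal), stated literally with
  the quotient groups as sets of right cosets of W.\<close>
definition quot_le :: "('a, 'b) monoid_scheme \<Rightarrow> 'a set \<Rightarrow> 'a set \<Rightarrow> 'a set \<Rightarrow> bool" where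
  "quot_le G V W U \<longleftrightarrow> (r_coset G W) ` V \<subseteq> (r_coset G W) ` (set_mult G U W)"

definition normal_covered :: "('a, 'b) monoid_scheme \<Rightarrow> 'a set \<Rightarrow> 'a set \<Rightarrow> 'a set list \<Rightarrow> bool" where
  "normal_covered G A B Ns \<longleftrightarrow> normal_series G Ns \<and>
     (\<forall>i. Suc i < length Ns \<longrightarrow> quot_le G (Ns ! Suc i) (Ns ! i) A \<or> quot_le G (Ns ! Suc i) (Ns ! i) B)"

end

theory Submission
  imports Defs
begin

text \<open>
  For a normal subgroup \<open>W\<close>, the quotient inclusion \<open>V/W \<le> UW/W\<close> says \<open>V \<subseteq> UW\<close>, and
  \<open>U\<close> covers \<open>V/W\<close> (with \<open>W \<subseteq> V\<close>) exactly when \<open>V \<subseteq> UW\<close>, by the Dedekind law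
  \<open>V \<inter> UW = (V \<inter> U)W\<close>. So (1) and (2) both concern normal series whose steps satisfy
  \<open>N\<^sub>i \<subseteq> AN\<^sub>i\<^sub>-\<^sub>1\<close> or \<open>N\<^sub>i \<subseteq> BN\<^sub>i\<^sub>-\<^sub>1\<close>. Given such a series and a proper normal subgroup
  \<open>K\<close>, the first term \<open>N\<^sub>i\<close> not inside \<open>K\<close> gives the normal subgroup \<open>KN\<^sub>i\<close> above \<open>K\<close>,
  contained in \<open>AK\<close> or \<open>BK\<close>; this is (3). Conversely, (3) builds a chief series upwards
  from \<open>1\<close>, refining each covered extension \<open>M/K\<close> to a chief factor below \<open>M\<close>, which is
  still covered. The Dedekind law also lifts \<open>N = (N \<inter> A)(N \<inter> B)\<close> from one term of the
  series to the next, and cutting the series at a term \<open>N\<close> and intersecting with \<open>N\<close>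
  gives such a series for \<open>N = (N \<inter> A)(N \<inter> B)\<close>, hence a core-factorisation.
\<close>

lemma successively_iff_nth:
  "successively P xs \<longleftrightarrow> (\<forall>i. Suc i < length xs \<longrightarrow> P (xs ! i) (xs ! Suc i))"
proof (induction P xs rule: successively.induct)
  case (3 P x y xs)
  then show ?case by (auto simp: nth_Cons' less_Suc_eq_0_disj)
qed auto

lemma exists_nth_Suc_change:
  assumes "xs \<noteq> []" and "P (hd xs)" and "\<not> P (last xs)"
  shows "\<exists>i. Suc i < length xs \<and> P (xs ! i) \<and> \<not> P (xs ! Suc i)"
  using assms
proof (induction xs)
  case (Cons x xs)
  then have "xs \<noteq> []" by auto
  show ?case
  proof (cases "P (hd xs)")
    case True
    with Cons.IH Cons.prems \<open>xs \<noteq> []\<close> obtain i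
      where "Suc i < length xs" "P (xs ! i)" "\<not> P (xs ! Suc i)"
      by auto
    then show ?thesis by (intro exI[of _ "Suc i"]) simp
  next
    case False
    with Cons.prems \<open>xs \<noteq> []\<close> show ?thesis by (intro exI[of _ 0]) (simp add: hd_conv_nth)
  qed
qed simp

lemma (in monoid) set_mult_subset_right:
  assumes "U \<subseteq> carrier G" and "\<one> \<in> V"
  shows "U \<subseteq> U <#> V"
proof
  fix u assume "u \<in> U"
  with assms have "u = u \<otimes> \<one>" by auto
  with \<open>u \<in> U\<close> assms(2) show "u \<in> U <#> V" unfolding set_mult_def by blast
qed

lemma (in monoid) set_mult_subset_left:
  assumes "V \<subseteq> carrier G" and "\<one> \<in> U"
  shows "V \<subseteq> U <#> V"
proof
  fix v assume "v \<in> V"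
  with assms have "v = \<one> \<otimes> v" by auto
  with \<open>v \<in> V\<close> assms(2) show "v \<in> U <#> V" unfolding set_mult_def by blast
qed

context group begin

lemma Dedekind_law_left:
  assumes N: "subgroup N G" and "U \<subseteq> N" and "V \<subseteq> carrier G"
  shows "N \<inter> (U <#> V) = U <#> (N \<inter> V)"
proof
  show "N \<inter> (U <#> V) \<subseteq> U <#> (N \<inter> V)"
  proof
    fix z assume "z \<in> N \<inter> (U <#> V)"
    then obtain x y where z: "z \<in> N" "x \<in> U" "y \<in> V" "z = x \<otimes> y"
      by (auto simp: set_mult_def)
    have "x \<in> N" using z(2) assms(2) by blast
    moreover have "x \<in> carrier G" "y \<in> carrier G"
      using \<open>x \<in> N\<close> z(3) assms(3) subgroup.mem_carrier[OF N] by auto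
    ultimately have "y = inv x \<otimes> z" by (simp add: z(4) flip: m_assoc)
    also have "\<dots> \<in> N" using \<open>x \<in> N\<close> z(1) N by (simp add: subgroup.m_closed subgroup.m_inv_closed)
    finally have "y \<in> N" .
    with z show "z \<in> U <#> (N \<inter> V)" by (auto simp: set_mult_def)
  qed
  show "U <#> (N \<inter> V) \<subseteq> N \<inter> (U <#> V)"
    using assms(2) subgroup.m_closed[OF N] by (auto simp: set_mult_def)
qed

lemma Dedekind_law_right:
  assumes N: "subgroup N G" and "U \<subseteq> carrier G" and "V \<subseteq> N"
  shows "N \<inter> (U <#> V) = (N \<inter> U) <#> V"
proof
  show "N \<inter> (U <#> V) \<subseteq> (N \<inter> U) <#> V"
  proof
    fix z assume "z \<in> N \<inter> (U <#> V)"
    then obtain x y where z: "z \<in> N" "x \<in> U" "y \<in> V" "z = x \<otimes> y"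
      by (auto simp: set_mult_def)
    have "y \<in> N" using z(3) assms(3) by blast
    moreover have "x \<in> carrier G" "y \<in> carrier G"
      using \<open>y \<in> N\<close> z(2) assms(2) subgroup.mem_carrier[OF N] by auto
    ultimately have "x = z \<otimes> inv y" by (simp add: z(4) m_assoc)
    also have "\<dots> \<in> N" using \<open>y \<in> N\<close> z(1) N by (simp add: subgroup.m_closed subgroup.m_inv_closed)
    finally have "x \<in> N" .
    with z show "z \<in> (N \<inter> U) <#> V" by (auto simp: set_mult_def)
  qed
  show "(N \<inter> U) <#> V \<subseteq> N \<inter> (U <#> V)"
    using assms(3) subgroup.m_closed[OF N] by (auto simp: set_mult_def)
qed

lemma normal_set_mult_absorb:
  assumes K: "K \<lhd> G" and A: "subgroup A G"
  shows "K <#> (A <#> K) = A <#> K"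
proof -
  have Kc: "K \<subseteq> carrier G" and Ac: "A \<subseteq> carrier G"
    using K A by (auto dest: normal_imp_subgroup subgroup.subset)
  have "K <#> (A <#> K) = (A <#> K) <#> K"
    using commut_normal[OF A K] set_mult_assoc[OF Kc Ac Kc] by simp
  also have "\<dots> = A <#> K"
    using set_mult_assoc[OF Ac Kc Kc] subgroup_mult_id[OF normal_imp_subgroup[OF K]] by simp
  finally show ?thesis .
qed

lemma subgroup_set_mult_absorb_right:
  assumes H: "subgroup H G" and "U \<subseteq> H" and "\<one> \<in> U"
  shows "H <#> U = H"
proof
  show "H <#> U \<subseteq> H"
    using mono_set_mult[OF order_refl \<open>U \<subseteq> H\<close>] subgroup_mult_id[OF H] by blast
  show "H \<subseteq> H <#> U"
    using set_mult_subset_right[OF subgroup.subset[OF H] \<open>\<one> \<in> U\<close>] .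
qed

lemma subgroup_set_mult_absorb_left:
  assumes H: "subgroup H G" and "U \<subseteq> H" and "\<one> \<in> U"
  shows "U <#> H = H"
proof
  show "U <#> H \<subseteq> H"
    using mono_set_mult[OF \<open>U \<subseteq> H\<close> order_refl] subgroup_mult_id[OF H] by blast
  show "H \<subseteq> U <#> H"
    using set_mult_subset_left[OF subgroup.subset[OF H] \<open>\<one> \<in> U\<close>] .
qed

lemma covers_iff_subset_set_mult:
  assumes K: "K \<lhd> G" and M: "subgroup M G" and "K \<subseteq> M" and A: "subgroup A G"
  shows "covers G A M K \<longleftrightarrow> M \<subseteq> A <#> K"
proof -
  have "K <#> (A \<inter> M) = (M \<inter> A) <#> K"
    using commut_normal[OF subgroups_Inter_pair[OF M A] K] by (simp add: Int_commute)
  also have "\<dots> = M \<inter> (A <#> K)"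
    using Dedekind_law_right[OF M subgroup.subset[OF A] \<open>K \<subseteq> M\<close>] by simp
  finally show ?thesis unfolding covers_def by blast
qed

lemma quot_le_iff_subset_set_mult:
  assumes W: "W \<lhd> G" and U: "subgroup U G" and V: "V \<subseteq> carrier G"
  shows "quot_le G V W U \<longleftrightarrow> V \<subseteq> U <#> W"
proof
  assume "V \<subseteq> U <#> W"
  then show "quot_le G V W U" unfolding quot_le_def by blast
next
  assume q: "quot_le G V W U"
  show "V \<subseteq> U <#> W"
  proof
    fix v assume "v \<in> V"
    with q obtain y where y: "y \<in> U <#> W" "W #> v = W #> y"
      unfolding quot_le_def by blast
    have "v \<in> W #> v"
      using rcos_self \<open>v \<in> V\<close> V normal_imp_subgroup[OF W] by blast
    also have "\<dots> = W #> y"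
      using y(2) .
    also have "\<dots> \<subseteq> W <#> (U <#> W)"
      unfolding r_coset_eq_set_mult using y(1) by (intro mono_set_mult) auto
    also have "\<dots> = U <#> W"
      using normal_set_mult_absorb[OF W U] .
    finally show "v \<in> U <#> W" .
  qed
qed

end

definition covered_series :: "('a, 'b) monoid_scheme \<Rightarrow> 'a set \<Rightarrow> 'a set \<Rightarrow> 'a set list \<Rightarrow> bool" where
  "covered_series G A B Ns \<longleftrightarrow> normal_series G Ns \<and>
     (\<forall>i. Suc i < length Ns \<longrightarrow>
        Ns ! Suc i \<subseteq> A <#>\<^bsub>G\<^esub> Ns ! i \<or> Ns ! Suc i \<subseteq> B <#>\<^bsub>G\<^esub> Ns ! i)"

definition has_covered_extensions :: "('a, 'b) monoid_scheme \<Rightarrow> 'a set \<Rightarrow> 'a set \<Rightarrow> bool" where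
  "has_covered_extensions G A B \<longleftrightarrow> (\<forall>K. K \<lhd> G \<longrightarrow> K \<noteq> carrier G \<longrightarrow>
     (\<exists>M. M \<lhd> G \<and> K \<subset> M \<and> (M \<subseteq> A <#>\<^bsub>G\<^esub> K \<or> M \<subseteq> B <#>\<^bsub>G\<^esub> K)))"

definition covered_chief_factor ::
    "('a, 'b) monoid_scheme \<Rightarrow> 'a set \<Rightarrow> 'a set \<Rightarrow> 'a set \<Rightarrow> 'a set \<Rightarrow> bool" where
  "covered_chief_factor G A B K M \<longleftrightarrow> K \<subset> M \<and>
     (\<forall>L. L \<lhd> G \<longrightarrow> K \<subseteq> L \<longrightarrow> L \<subseteq> M \<longrightarrow> L = K \<or> L = M) \<and>
     (covers G A M K \<or> covers G B M K)"

context group begin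

lemma normal_series_normal:
  "normal_series G Ns \<Longrightarrow> i < length Ns \<Longrightarrow> Ns ! i \<lhd> G"
  unfolding normal_series_def by simp

lemma normal_series_mono:
  assumes Ns: "normal_series G Ns" and "i \<le> j" and "j < length Ns"
  shows "Ns ! i \<subseteq> Ns ! j"
  using assms(2,3)
proof (induction j)
  case (Suc j)
  show ?case
  proof (cases "i = Suc j")
    case False
    with Suc have "Ns ! i \<subseteq> Ns ! j" by simp
    also have "\<dots> \<subseteq> Ns ! Suc j" using Ns Suc.prems(2) unfolding normal_series_def by blast
    finally show ?thesis .
  qed simp
qed simp

lemma normal_covered_iff_covered_series:
  assumes A: "subgroup A G" and B: "subgroup B G"
  shows "normal_covered G A B Ns \<longleftrightarrow> covered_series G A B Ns"
proof -
  have "quot_le G (Ns ! Suc i) (Ns ! i) U \<longleftrightarrow> Ns ! Suc i \<subseteq> U <#> Ns ! i"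
    if Ns: "normal_series G Ns" and i: "Suc i < length Ns" and U: "subgroup U G" for i U
    using quot_le_iff_subset_set_mult[OF normal_series_normal[OF Ns] U]
      normal_imp_subgroup[OF normal_series_normal[OF Ns i]] i by (simp add: subgroup.subset)
  with A B show ?thesis
    unfolding normal_covered_def covered_series_def by blast
qed

lemma has_covered_extensions_iff_quot_le:
  assumes A: "subgroup A G" and B: "subgroup B G"
  shows "has_covered_extensions G A B \<longleftrightarrow> (\<forall>K. K \<lhd> G \<longrightarrow> K \<noteq> carrier G \<longrightarrow>
            (\<exists>M. M \<lhd> G \<and> K \<subset> M \<and> (quot_le G M K A \<or> quot_le G M K B)))"
proof -
  have "quot_le G M K U \<longleftrightarrow> M \<subseteq> U <#> K" if "K \<lhd> G" "M \<lhd> G" "subgroup U G" for K M U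
    using quot_le_iff_subset_set_mult[OF that(1,3)] normal_imp_subgroup[OF that(2)]
    by (simp add: subgroup.subset)
  with A B show ?thesis
    unfolding has_covered_extensions_def by meson
qed

lemma chief_covered_imp_covered_series:
  assumes A: "subgroup A G" and B: "subgroup B G" and cc: "chief_covered G A B Ns"
  shows "covered_series G A B Ns"
proof -
  have Ns: "normal_series G Ns"
    using cc unfolding chief_covered_def chief_series_def by blast
  have "Ns ! Suc i \<subseteq> A <#> Ns ! i \<or> Ns ! Suc i \<subseteq> B <#> Ns ! i" if i: "Suc i < length Ns" for i
  proof -
    have "Ns ! i \<lhd> G" "subgroup (Ns ! Suc i) G"
      using normal_series_normal[OF Ns] normal_imp_subgroup i by auto
    moreover have "Ns ! i \<subseteq> Ns ! Suc i"
      using normal_series_mono[OF Ns _ i] by simp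
    ultimately show ?thesis
      using cc i covers_iff_subset_set_mult[OF _ _ _ A] covers_iff_subset_set_mult[OF _ _ _ B]
      unfolding chief_covered_def by blast
  qed
  with Ns show ?thesis unfolding covered_series_def by blast
qed

lemma covered_series_imp_has_covered_extensions:
  assumes cs: "covered_series G A B Ns" and A: "subgroup A G" and B: "subgroup B G"
  shows "has_covered_extensions G A B"
  unfolding has_covered_extensions_def
proof (intro allI impI)
  fix K assume K: "K \<lhd> G" and "K \<noteq> carrier G"
  have Ns: "normal_series G Ns" using cs unfolding covered_series_def by blast
  have Kc: "K \<subseteq> carrier G" and "\<one> \<in> K"
    using subgroup.subset subgroup.one_closed normal_imp_subgroup[OF K] by auto
  with Ns \<open>K \<noteq> carrier G\<close> obtain i
    where i: "Suc i < length Ns" "Ns ! i \<subseteq> K" "\<not> Ns ! Suc i \<subseteq> K"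
    using exists_nth_Suc_change[of Ns "\<lambda>N. N \<subseteq> K"] unfolding normal_series_def by auto
  define M where "M = K <#> Ns ! Suc i"
  have N: "Ns ! Suc i \<lhd> G" using normal_series_normal[OF Ns i(1)] .
  have "\<one> \<in> Ns ! Suc i" using subgroup.one_closed[OF normal_imp_subgroup[OF N]] .
  have absorb: "M \<subseteq> U <#> K" if "subgroup U G" and "Ns ! Suc i \<subseteq> U <#> Ns ! i" for U
  proof -
    have "M \<subseteq> K <#> (U <#> K)"
      unfolding M_def using that(2) mono_set_mult[OF order_refl i(2)]
      by (intro mono_set_mult) blast+
    then show ?thesis using normal_set_mult_absorb[OF K that(1)] by simp
  qed
  have "M \<lhd> G" unfolding M_def using normal_subgroup_set_mult_closed[OF K N] .
  moreover have "K \<subset> M"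
    using set_mult_subset_right[OF Kc \<open>\<one> \<in> Ns ! Suc i\<close>]
      set_mult_subset_left[OF subgroup.subset[OF normal_imp_subgroup[OF N]] \<open>\<one> \<in> K\<close>] i(3)
    unfolding M_def by blast
  moreover have "Ns ! Suc i \<subseteq> A <#> Ns ! i \<or> Ns ! Suc i \<subseteq> B <#> Ns ! i"
    using cs i(1) unfolding covered_series_def by blast
  then have "M \<subseteq> A <#> K \<or> M \<subseteq> B <#> K"
    using absorb[OF A] absorb[OF B] by blast
  ultimately show "\<exists>M. M \<lhd> G \<and> K \<subset> M \<and> (M \<subseteq> A <#> K \<or> M \<subseteq> B <#> K)"
    by blast
qed

lemma exists_chief_factor_below:
  assumes fin: "finite (carrier G)" and "K \<lhd> G" and "M0 \<lhd> G" and "K \<subset> M0"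
  shows "\<exists>M. M \<lhd> G \<and> K \<subset> M \<and> M \<subseteq> M0 \<and>
           (\<forall>L. L \<lhd> G \<longrightarrow> K \<subseteq> L \<longrightarrow> L \<subseteq> M \<longrightarrow> L = K \<or> L = M)"
proof -
  define S where "S = {M. M \<lhd> G \<and> K \<subset> M \<and> M \<subseteq> M0}"
  have "M0 \<in> S" unfolding S_def using assms by blast
  then obtain M where "M \<in> S" and min: "\<And>L. L \<in> S \<Longrightarrow> card M \<le> card L"
    using ex_has_least_nat[of "\<lambda>M. M \<in> S" M0 card] by blast
  then have M: "M \<lhd> G" "K \<subset> M" "M \<subseteq> M0" unfolding S_def by auto
  have "finite M"
    using finite_subset[OF subgroup.subset[OF normal_imp_subgroup[OF M(1)]] fin] .
  have "L = K \<or> L = M" if "L \<lhd> G" "K \<subseteq> L" "L \<subseteq> M" for L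
  proof (cases "L = K")
    case False
    with that M have "L \<in> S" unfolding S_def by auto
    with min that(3) \<open>finite M\<close> show ?thesis by (simp add: card_seteq)
  qed simp
  with M show ?thesis by blast
qed

lemma has_covered_extensions_imp_chief_chain:
  assumes fin: "finite (carrier G)" and ext: "has_covered_extensions G A B"
    and A: "subgroup A G" and B: "subgroup B G" and K: "K \<lhd> G"
  shows "\<exists>Ns. Ns \<noteq> [] \<and> hd Ns = K \<and> last Ns = carrier G \<and> (\<forall>N\<in>set Ns. N \<lhd> G) \<and>
           successively (covered_chief_factor G A B) Ns"
  using K
proof (induction "card (carrier G) - card K" arbitrary: K rule: less_induct)
  case less
  show ?case
  proof (cases "K = carrier G")
    case True
    with less.prems show ?thesis by (intro exI[of _ "[K]"]) simp
  next
    case False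
    obtain M0 where M0: "M0 \<lhd> G" "K \<subset> M0" "M0 \<subseteq> A <#> K \<or> M0 \<subseteq> B <#> K"
      using ext[unfolded has_covered_extensions_def, rule_format, OF less.prems False] by blast
    obtain M where M: "M \<lhd> G" "K \<subset> M" "M \<subseteq> M0"
        and chief: "\<forall>L. L \<lhd> G \<longrightarrow> K \<subseteq> L \<longrightarrow> L \<subseteq> M \<longrightarrow> L = K \<or> L = M"
      using exists_chief_factor_below[OF fin less.prems M0(1,2)] by blast
    have "M \<subseteq> A <#> K \<or> M \<subseteq> B <#> K"
      using M0(3) M(3) by blast
    then have "covers G A M K \<or> covers G B M K"
      using covers_iff_subset_set_mult[OF less.prems normal_imp_subgroup[OF M(1)] _ A]
        covers_iff_subset_set_mult[OF less.prems normal_imp_subgroup[OF M(1)] _ B] M(2)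
      by blast
    with M(2) chief have step: "covered_chief_factor G A B K M"
      unfolding covered_chief_factor_def by blast
    have Mc: "M \<subseteq> carrier G" using subgroup.subset[OF normal_imp_subgroup[OF M(1)]] .
    have "card K < card M" using psubset_card_mono[OF finite_subset[OF Mc fin] M(2)] .
    moreover have "card M \<le> card (carrier G)" using card_mono[OF fin Mc] .
    ultimately have "card (carrier G) - card M < card (carrier G) - card K" by linarith
    then obtain Ns
      where Ns: "Ns \<noteq> []" "hd Ns = M" "last Ns = carrier G" "\<forall>N\<in>set Ns. N \<lhd> G"
        "successively (covered_chief_factor G A B) Ns"
      using less.hyps[OF _ M(1)] by blast
    have "successively (covered_chief_factor G A B) (K # Ns)"
      using Ns(1,2,5) step by (cases Ns) simp_all
    with Ns(1,3,4) less.prems show ?thesis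
      by (intro exI[of _ "K # Ns"]) simp
  qed
qed

lemma has_covered_extensions_imp_chief_covered:
  assumes fin: "finite (carrier G)" and ext: "has_covered_extensions G A B"
    and A: "subgroup A G" and B: "subgroup B G"
  shows "\<exists>Ns. chief_covered G A B Ns"
proof -
  obtain Ns where Ns: "Ns \<noteq> []" "hd Ns = {\<one>}" "last Ns = carrier G" "\<forall>N\<in>set Ns. N \<lhd> G"
      and "\<forall>i. Suc i < length Ns \<longrightarrow> covered_chief_factor G A B (Ns ! i) (Ns ! Suc i)"
    using has_covered_extensions_imp_chief_chain[OF fin ext A B one_is_normal]
    unfolding successively_iff_nth by blast
  then have steps: "\<forall>i. Suc i < length Ns \<longrightarrow> Ns ! i \<subset> Ns ! Suc i \<and>
      (\<forall>L. L \<lhd> G \<longrightarrow> Ns ! i \<subseteq> L \<longrightarrow> L \<subseteq> Ns ! Suc i \<longrightarrow> L = Ns ! i \<or> L = Ns ! Suc i) \<and>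
      (covers G A (Ns ! Suc i) (Ns ! i) \<or> covers G B (Ns ! Suc i) (Ns ! i))"
    unfolding covered_chief_factor_def by blast
  moreover from Ns steps have "normal_series G Ns"
    unfolding normal_series_def by (simp add: less_imp_le)
  ultimately have "chief_covered G A B Ns"
    unfolding chief_covered_def chief_series_def by (intro conjI allI impI) simp_all
  then show ?thesis ..
qed

lemma factorisation_extends:
  assumes N: "N \<lhd> G" and N': "subgroup N' G" and "N \<subseteq> N'"
    and A: "subgroup A G" and B: "subgroup B G"
    and N_eq: "N = (N \<inter> A) <#> (N \<inter> B)"
    and step: "N' \<subseteq> A <#> N \<or> N' \<subseteq> B <#> N"
  shows "N' = (N' \<inter> A) <#> (N' \<inter> B)"
proof
  show "(N' \<inter> A) <#> (N' \<inter> B) \<subseteq> N'"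
    using mono_set_mult[of "N' \<inter> A" N' "N' \<inter> B" N'] subgroup_mult_id[OF N'] by blast
  have Nsub: "subgroup N G" using normal_imp_subgroup[OF N] .
  have Ac: "A \<subseteq> carrier G" and Bc: "B \<subseteq> carrier G" and
    NAc: "N \<inter> A \<subseteq> carrier G" and NBc: "N \<inter> B \<subseteq> carrier G"
    using A B subgroup.subset by blast+
  have one: "\<one> \<in> N \<inter> A" "\<one> \<in> N \<inter> B"
    using Nsub A B subgroup.one_closed by blast+
  from step show "N' \<subseteq> (N' \<inter> A) <#> (N' \<inter> B)"
  proof
    assume "N' \<subseteq> A <#> N"
    also have "A <#> N = (A <#> (N \<inter> A)) <#> (N \<inter> B)"
      using set_mult_assoc[OF Ac NAc NBc] N_eq by simp
    also have "\<dots> = A <#> (N \<inter> B)"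
      using subgroup_set_mult_absorb_right[OF A _ one(1)] by simp
    finally have "N' \<subseteq> N' \<inter> (A <#> (N \<inter> B))" by blast
    also have "\<dots> = (N' \<inter> A) <#> (N \<inter> B)"
      using Dedekind_law_right[OF N' Ac] \<open>N \<subseteq> N'\<close> by blast
    also have "\<dots> \<subseteq> (N' \<inter> A) <#> (N' \<inter> B)"
      using \<open>N \<subseteq> N'\<close> by (intro mono_set_mult) auto
    finally show ?thesis .
  next
    assume "N' \<subseteq> B <#> N"
    also have "B <#> N = (N \<inter> A) <#> ((N \<inter> B) <#> B)"
      using commut_normal[OF B N] set_mult_assoc[OF NAc NBc Bc] N_eq by simp
    also have "\<dots> = (N \<inter> A) <#> B"
      using subgroup_set_mult_absorb_left[OF B _ one(2)] by simp
    finally have "N' \<subseteq> N' \<inter> ((N \<inter> A) <#> B)" by blast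
    also have "\<dots> = (N \<inter> A) <#> (N' \<inter> B)"
      using Dedekind_law_left[OF N' _ Bc] \<open>N \<subseteq> N'\<close> by blast
    also have "\<dots> \<subseteq> (N' \<inter> A) <#> (N' \<inter> B)"
      using \<open>N \<subseteq> N'\<close> by (intro mono_set_mult) auto
    finally show ?thesis .
  qed
qed

lemma covered_series_factorisation:
  assumes cs: "covered_series G A B Ns" and A: "subgroup A G" and B: "subgroup B G"
    and "i < length Ns"
  shows "Ns ! i = (Ns ! i \<inter> A) <#> (Ns ! i \<inter> B)"
proof -
  have Ns: "normal_series G Ns" using cs unfolding covered_series_def by blast
  show ?thesis
    using \<open>i < length Ns\<close>
  proof (induction i)
    case 0
    from Ns have "Ns ! 0 = {\<one>}" unfolding normal_series_def by (metis hd_conv_nth)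
    then show ?case
      using subgroup.one_closed[OF A] subgroup.one_closed[OF B] by (simp add: set_mult_def)
  next
    case (Suc i)
    show ?case
    proof (rule factorisation_extends[OF normal_series_normal[OF Ns]
          normal_imp_subgroup[OF normal_series_normal[OF Ns Suc.prems]] _ A B])
      show "Ns ! i \<subseteq> Ns ! Suc i" using normal_series_mono[OF Ns _ Suc.prems] by simp
      show "Ns ! i = (Ns ! i \<inter> A) <#> (Ns ! i \<inter> B)" using Suc by simp
      show "Ns ! Suc i \<subseteq> A <#> Ns ! i \<or> Ns ! Suc i \<subseteq> B <#> Ns ! i"
        using cs Suc.prems unfolding covered_series_def by blast
    qed (use Suc.prems in simp)
  qed
qed

lemma covered_series_take:
  assumes cs: "covered_series G A B Ns" and A: "subgroup A G" and B: "subgroup B G"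
    and j: "j < length Ns"
  shows "covered_series (G\<lparr>carrier := Ns ! j\<rparr>) (Ns ! j \<inter> A) (Ns ! j \<inter> B) (take (Suc j) Ns)"
proof -
  define N where "N = Ns ! j"
  have Ns: "normal_series G Ns" using cs unfolding covered_series_def by blast
  have Nsub: "subgroup N G" unfolding N_def using normal_imp_subgroup[OF normal_series_normal[OF Ns j]] .
  have below: "Ns ! i \<subseteq> N" if "i < Suc j" for i
    unfolding N_def using normal_series_mono[OF Ns _ j] that by simp
  have restrict: "Ns ! Suc i \<subseteq> (N \<inter> U) <#> Ns ! i"
    if "subgroup U G" "Ns ! Suc i \<subseteq> U <#> Ns ! i" "Suc i < Suc j" for U i
    using Dedekind_law_right[OF Nsub subgroup.subset[OF that(1)] below[of i]] that(2,3)
      below[of "Suc i"] by auto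
  have "normal_series (G\<lparr>carrier := N\<rparr>) (take (Suc j) Ns)"
    unfolding normal_series_def
  proof (intro conjI ballI allI impI)
    show "take (Suc j) Ns \<noteq> []" and "hd (take (Suc j) Ns) = {\<one>\<^bsub>G\<lparr>carrier := N\<rparr>\<^esub>}"
      using Ns j unfolding normal_series_def by auto
    show "last (take (Suc j) Ns) = carrier (G\<lparr>carrier := N\<rparr>)"
      using j unfolding N_def by (simp add: take_Suc_conv_app_nth)
    show "Z \<lhd> G\<lparr>carrier := N\<rparr>" if "Z \<in> set (take (Suc j) Ns)" for Z
    proof -
      from that j obtain i where "i < Suc j" "Z = Ns ! i"
        by (auto simp: in_set_conv_nth)
      then show ?thesis
        using normal_restrict_supergroup[OF Nsub normal_series_normal[OF Ns] below] j by simp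
    qed
    show "take (Suc j) Ns ! i \<subseteq> take (Suc j) Ns ! Suc i" if "Suc i < length (take (Suc j) Ns)" for i
      using that normal_series_mono[OF Ns, of i "Suc i"] by simp
  qed
  moreover have "take (Suc j) Ns ! Suc i \<subseteq> (N \<inter> A) <#> take (Suc j) Ns ! i \<or>
      take (Suc j) Ns ! Suc i \<subseteq> (N \<inter> B) <#> take (Suc j) Ns ! i"
    if i: "Suc i < length (take (Suc j) Ns)" for i
  proof -
    from i have "Suc i < Suc j" "Suc i < length Ns" by auto
    moreover from cs this(2) have "Ns ! Suc i \<subseteq> A <#> Ns ! i \<or> Ns ! Suc i \<subseteq> B <#> Ns ! i"
      unfolding covered_series_def by blast
    ultimately show ?thesis using restrict[OF A] restrict[OF B] by auto
  qed
  ultimately show ?thesis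
    unfolding covered_series_def N_def by auto
qed

lemma covered_series_core_factorisation:
  assumes fin: "finite (carrier G)" and cs: "covered_series G A B Ns"
    and A: "subgroup A G" and B: "subgroup B G"
    and j: "j < length Ns" and nontriv: "Ns ! j \<noteq> {\<one>}"
  shows "core_factorisation (G\<lparr>carrier := Ns ! j\<rparr>) (Ns ! j \<inter> A) (Ns ! j \<inter> B)"
proof -
  define N where "N = Ns ! j"
  have Ns: "normal_series G Ns" using cs unfolding covered_series_def by blast
  have Nsub: "subgroup N G" unfolding N_def using normal_imp_subgroup[OF normal_series_normal[OF Ns j]] .
  have grp: "group (G\<lparr>carrier := N\<rparr>)" using subgroup.subgroup_is_group[OF Nsub is_group] .
  have fin': "finite (carrier (G\<lparr>carrier := N\<rparr>))"
    using finite_subset[OF subgroup.subset[OF Nsub] fin] by simp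
  have A': "subgroup (N \<inter> A) (G\<lparr>carrier := N\<rparr>)" and B': "subgroup (N \<inter> B) (G\<lparr>carrier := N\<rparr>)"
    using subgroup_incl[OF subgroups_Inter_pair[OF Nsub A] Nsub]
      subgroup_incl[OF subgroups_Inter_pair[OF Nsub B] Nsub] by auto
  have "has_covered_extensions (G\<lparr>carrier := N\<rparr>) (N \<inter> A) (N \<inter> B)"
    using group.covered_series_imp_has_covered_extensions[OF grp _ A' B']
      covered_series_take[OF cs A B j] unfolding N_def by blast
  then obtain Ms where "chief_covered (G\<lparr>carrier := N\<rparr>) (N \<inter> A) (N \<inter> B) Ms"
    using group.has_covered_extensions_imp_chief_covered[OF grp fin' _ A' B'] by blast
  moreover have "N = (N \<inter> A) <#> (N \<inter> B)"
    unfolding N_def using covered_series_factorisation[OF cs A B j] .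
  ultimately show ?thesis
    using nontriv A' B' unfolding core_factorisation_def N_def by auto
qed

lemma covered_series_terms:
  assumes "finite (carrier G)" and cs: "covered_series G A B Ns"
    and A: "subgroup A G" and B: "subgroup B G"
  shows "\<forall>N\<in>set Ns. N = (N \<inter> A) <#> (N \<inter> B) \<and>
           (N \<noteq> {\<one>} \<longrightarrow> core_factorisation (G\<lparr>carrier := N\<rparr>) (N \<inter> A) (N \<inter> B))"
proof
  fix N assume "N \<in> set Ns"
  then obtain j where "j < length Ns" "N = Ns ! j" by (auto simp: in_set_conv_nth)
  then show "N = (N \<inter> A) <#> (N \<inter> B) \<and>
      (N \<noteq> {\<one>} \<longrightarrow> core_factorisation (G\<lparr>carrier := N\<rparr>) (N \<inter> A) (N \<inter> B))"
    using covered_series_factorisation[OF cs A B] covered_series_core_factorisation[OF assms]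
    by simp
qed

end

theorem mainTheorem1:
  fixes G (structure) and A B :: "'a set"
  assumes "group G" and "finite (carrier G)" and "carrier G \<noteq> {\<one>}"
    and "subgroup A G" and "subgroup B G" and "A <#> B = carrier G"
  shows "(core_factorisation G A B \<longleftrightarrow> (\<exists>Ns. normal_covered G A B Ns))
    \<and> ((\<exists>Ns. normal_covered G A B Ns) \<longleftrightarrow>
         (\<forall>K. K \<lhd> G \<longrightarrow> K \<noteq> carrier G \<longrightarrow>
            (\<exists>M. M \<lhd> G \<and> K \<subset> M \<and> (quot_le G M K A \<or> quot_le G M K B))))
    \<and> (\<forall>Ns. chief_covered G A B Ns \<longrightarrow> (\<forall>N\<in>set Ns.
          N = (N \<inter> A) <#> (N \<inter> B) \<and>
          (N \<noteq> {\<one>} \<longrightarrow> core_factorisation (G\<lparr>carrier := N\<rparr>) (N \<inter> A) (N \<inter> B))))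
    \<and> (\<forall>Ns. normal_covered G A B Ns \<longrightarrow> (\<forall>N\<in>set Ns.
          N = (N \<inter> A) <#> (N \<inter> B) \<and>
          (N \<noteq> {\<one>} \<longrightarrow> core_factorisation (G\<lparr>carrier := N\<rparr>) (N \<inter> A) (N \<inter> B))))"
proof -
  interpret group G by fact
  note fin = \<open>finite (carrier G)\<close> and A = \<open>subgroup A G\<close> and B = \<open>subgroup B G\<close>
  have normal_covered_iff: "normal_covered G A B Ns \<longleftrightarrow> covered_series G A B Ns" for Ns
    using normal_covered_iff_covered_series[OF A B] .
  have chief_iff_ext: "(\<exists>Ns. chief_covered G A B Ns) \<longleftrightarrow> has_covered_extensions G A B"
    using has_covered_extensions_imp_chief_covered[OF fin _ A B]
      covered_series_imp_has_covered_extensions[OF chief_covered_imp_covered_series[OF A B] A B]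
    by blast
  have normal_iff_ext: "(\<exists>Ns. normal_covered G A B Ns) \<longleftrightarrow> has_covered_extensions G A B"
    using chief_iff_ext normal_covered_iff chief_covered_imp_covered_series[OF A B]
      covered_series_imp_has_covered_extensions[OF _ A B] by blast
  have "core_factorisation G A B \<longleftrightarrow> (\<exists>Ns. chief_covered G A B Ns)"
    using assms(3-6) unfolding core_factorisation_def by blast
  with chief_iff_ext normal_iff_ext has_covered_extensions_iff_quot_le[OF A B]
    covered_series_terms[OF fin chief_covered_imp_covered_series[OF A B] A B]
    covered_series_terms[OF fin normal_covered_iff[THEN iffD1] A B]
  show ?thesis
    by (intro conjI allI impI) simp_all
qed

end
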